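(* The fixed points satisfy $\eta_1<\eta_0$.
   Context: Parameters $a,b,p,q\in(0,1)$ with $a+b\ne1$. $\alpha_0(z)=(1-p)(a+b-1)z+1-b+pb$, $\alpha_1(z)=(1-q)(1-a-b)z+b+q-bq$, $r_0(z)=\frac{(a+b-1)z+1-b}{\alpha_0(z)}$, $r_1(z)=\frac{q(a+b-1)z+q-qb}{\alpha_1(z)}$ for $z\in[0,1]$. $\eta_0$ and $\eta_1$ denote the unique fixed points in $[0,1]$ of $r_0$ and $r_1$ respectively. *)

theory Defs
  imports Complex_Main
begin

definition alpha0 :: "real \<Rightarrow> real \<Rightarrow> real \<Rightarrow> real \<Rightarrow> real" where
  "alpha0 a b p z = (1 - p) * (a + b - 1) * z + 1 - b + p * b"

definition alpha1 :: "real \<Rightarrow> real \<Rightarrow> real \<Rightarrow> real \<Rightarrow> real" where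
  "alpha1 a b q z = (1 - q) * (1 - a - b) * z + b + q - b * q"

definition r0 :: "real \<Rightarrow> real \<Rightarrow> real \<Rightarrow> real \<Rightarrow> real" where
  "r0 a b p z = ((a + b - 1) * z + 1 - b) / alpha0 a b p z"

definition r1 :: "real \<Rightarrow> real \<Rightarrow> real \<Rightarrow> real \<Rightarrow> real" where
  "r1 a b q z = (q * (a + b - 1) * z + q - q * b) / alpha1 a b q z"

definition eta0 :: "real \<Rightarrow> real \<Rightarrow> real \<Rightarrow> real" where
  "eta0 a b p = (THE z. z \<in> {0..1} \<and> r0 a b p z = z)"

definition eta1 :: "real \<Rightarrow> real \<Rightarrow> real \<Rightarrow> real" where
  "eta1 a b q = (THE z. z \<in> {0..1} \<and> r1 a b q z = z)"

end

theory Submission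
  imports Defs
begin

text \<open>Both r0 and r1 are linear fractional maps z \<mapsto> (u z + v) / (s z + t) whose denominator is
positive on [0,1] and which send 0 above 0 and 1 below 1. The fixed point equation of such a map is
a quadratic with a negative value at 0 and a positive value at 1, so it has exactly one root in
[0,1], and that root lies below every x \<in> [0,1] with r x < x. Finally r1 < r0 pointwise on [0,1],
so r1 \<eta>0 < r0 \<eta>0 = \<eta>0, which forces \<eta>1 < \<eta>0.\<close>

definition linfrac :: "real \<Rightarrow> real \<Rightarrow> real \<Rightarrow> real \<Rightarrow> real \<Rightarrow> real" where
  "linfrac u v s t z = (u * z + v) / (s * z + t)"

lemma convex_comb_pos:
  fixes z P Q :: real
  assumes "z \<in> {0..1}" "P > 0" "Q > 0"
  shows "(1 - z) * P + z * Q > 0"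
proof (cases "z < 1")
  case True
  then have "(1 - z) * P > 0" using assms by simp
  moreover have "z * Q \<ge> 0" using assms by simp
  ultimately show ?thesis by linarith
next
  case False
  then show ?thesis using assms by simp
qed

lemma affine_pos_on_unit_interval:
  fixes s t z :: real
  assumes "t > 0" "s + t > 0" "z \<in> {0..1}"
  shows "s * z + t > 0"
proof -
  have "s * z + t = (1 - z) * t + z * (s + t)" by (simp add: algebra_simps)
  with convex_comb_pos[OF assms(3,1,2)] show ?thesis by simp
qed

lemma quadratic_root_unit_interval_unique:
  fixes A B C x y :: real
  assumes "C < 0" "A + B + C > 0"
    and x: "x \<in> {0..1}" "A * x\<^sup>2 + B * x + C = 0"
    and y: "y \<in> {0..1}" "A * y\<^sup>2 + B * y + C = 0"
  shows "x = y"
proof (rule ccontr)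
  assume "x \<noteq> y"
  moreover have "(x - y) * (A * (x + y) + B) = 0"
    using x(2) y(2) by (simp add: algebra_simps power2_eq_square)
  ultimately have B: "B = - A * (x + y)" by simp
  have C: "C = A * (x * y)" using x(2) by (simp add: B algebra_simps power2_eq_square)
  have "x * y \<ge> 0" "(1 - x) * (1 - y) \<ge> 0" using x y by auto
  moreover have "A + B + C = A * ((1 - x) * (1 - y))" using B C by (simp add: algebra_simps)
  ultimately show False
    using assms(1,2) C by (smt (verit) mult_nonneg_nonneg mult_nonpos_nonneg)
qed

lemma linfrac_fixed_iff:
  assumes "s * z + t \<noteq> 0"
  shows "linfrac u v s t z = z \<longleftrightarrow> s * z\<^sup>2 + (t - u) * z + - v = 0"
  using assms by (auto simp: linfrac_def divide_eq_eq algebra_simps power2_eq_square)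

locale linfrac_unit_interval =
  fixes u v s t :: real
  assumes denom_pos_0: "t > 0" and denom_pos_1: "s + t > 0"
    and above_0: "v > 0" and below_1: "u + v < s + t"
begin

abbreviation "g z \<equiv> s * z\<^sup>2 + (t - u) * z + - v"

lemma fixed_iff: "z \<in> {0..1} \<Longrightarrow> linfrac u v s t z = z \<longleftrightarrow> g z = 0"
  using affine_pos_on_unit_interval[OF denom_pos_0 denom_pos_1] linfrac_fixed_iff
  by (metis less_irrefl)

lemma fixed_point_unique:
  assumes "x \<in> {0..1}" "linfrac u v s t x = x" "y \<in> {0..1}" "linfrac u v s t y = y"
  shows "x = y"
  using quadratic_root_unit_interval_unique[of "- v" s "t - u"] assms fixed_iff above_0 below_1
  by auto

lemma fixed_point_below:
  assumes x: "x \<in> {0..1}" "linfrac u v s t x < x"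
    and z: "z \<in> {0..1}" "linfrac u v s t z = z"
  shows "z < x"
proof -
  have "u * x + v < x * (s * x + t)"
    using x affine_pos_on_unit_interval[OF denom_pos_0 denom_pos_1]
    by (simp add: linfrac_def divide_less_eq mult.commute)
  then have gx: "g x > 0" by (simp add: algebra_simps power2_eq_square)
  have "\<exists>w\<ge>0. w \<le> x \<and> g w = 0"
    by (rule IVT) (use x gx above_0 in \<open>auto intro!: continuous_intros\<close>)
  then obtain w where w: "0 \<le> w" "w \<le> x" "g w = 0" by blast
  with x have "w \<in> {0..1}" "linfrac u v s t w = w" by (auto simp: fixed_iff)
  then have "z = w" using fixed_point_unique z by blast
  moreover have "w \<noteq> x" using w gx by auto
  ultimately show ?thesis using w by simp
qed

lemma unique_fixed_point: "\<exists>!z. z \<in> {0..1} \<and> linfrac u v s t z = z"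
proof -
  have "g 1 > 0" using below_1 by simp
  then have "\<exists>z\<ge>0. z \<le> 1 \<and> g z = 0"
    by (intro IVT) (use above_0 in \<open>auto intro!: continuous_intros\<close>)
  then show ?thesis using fixed_iff fixed_point_unique by (metis atLeastAtMost_iff)
qed

end

lemma r0_eq_linfrac: "r0 a b p = linfrac (a + b - 1) (1 - b) ((1 - p) * (a + b - 1)) (1 - b + p * b)"
  by (auto simp: fun_eq_iff r0_def alpha0_def linfrac_def algebra_simps)

lemma r1_eq_linfrac: "r1 a b q = linfrac (q * (a + b - 1)) (q - q * b) ((1 - q) * (1 - a - b)) (b + q - b * q)"
  by (auto simp: fun_eq_iff r1_def alpha1_def linfrac_def algebra_simps)

context
  fixes a b :: real
  assumes a: "0 < a" "a < 1" and b: "0 < b" "b < 1"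
begin

lemma r0_linfrac_unit_interval:
  assumes "0 < p" "p < 1"
  shows "linfrac_unit_interval (a + b - 1) (1 - b) ((1 - p) * (a + b - 1)) (1 - b + p * b)"
proof
  show "0 < 1 - b + p * b" using assms b by (smt (verit) mult_pos_pos)
  have "(1 - p) * (a + b - 1) + (1 - b + p * b) = (1 - p) * a + p" by (simp add: algebra_simps)
  moreover have "(1 - p) * a > 0" "a * p < p" "0 < p" using assms a by simp_all
  ultimately show "0 < (1 - p) * (a + b - 1) + (1 - b + p * b)"
    and "a + b - 1 + (1 - b) < (1 - p) * (a + b - 1) + (1 - b + p * b)"
    by (simp_all add: algebra_simps)
qed (use b in simp)

lemma r1_linfrac_unit_interval:
  assumes "0 < q" "q < 1"
  shows "linfrac_unit_interval (q * (a + b - 1)) (q - q * b) ((1 - q) * (1 - a - b)) (b + q - b * q)"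
proof
  have "q * b < q" using assms b by simp
  then show "0 < b + q - b * q" "0 < q - q * b" using b by (auto simp: mult.commute)
  have "(1 - q) * (1 - a - b) + (b + q - b * q) = 1 - a * (1 - q)" by (simp add: algebra_simps)
  moreover have "a * (1 - q) < 1" using assms a by (smt (verit) mult_less_cancel_left1)
  ultimately show "0 < (1 - q) * (1 - a - b) + (b + q - b * q)"
    and "q * (a + b - 1) + (q - q * b) < (1 - q) * (1 - a - b) + (b + q - b * q)"
    using a assms by (auto simp: algebra_simps)
qed

lemma r1_less_r0:
  assumes p: "0 < p" "p < 1" and q: "0 < q" "q < 1" and z: "z \<in> {0..1}"
  shows "r1 a b q z < r0 a b p z"
proof -
  interpret r0: linfrac_unit_interval "a + b - 1" "1 - b" "(1 - p) * (a + b - 1)" "1 - b + p * b"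
    by (rule r0_linfrac_unit_interval[OF p])
  interpret r1: linfrac_unit_interval "q * (a + b - 1)" "q - q * b" "(1 - q) * (1 - a - b)" "b + q - b * q"
    by (rule r1_linfrac_unit_interval[OF q])
  have al0: "alpha0 a b p z > 0"
    using affine_pos_on_unit_interval[OF r0.denom_pos_0 r0.denom_pos_1 z]
    by (simp add: alpha0_def)
  have al1: "alpha1 a b q z > 0"
    using affine_pos_on_unit_interval[OF r1.denom_pos_0 r1.denom_pos_1 z]
    by (simp add: alpha1_def)
  have "alpha1 a b q z - q * alpha0 a b p z = (1 - p * q) * ((1 - z) * b + z * (1 - a))"
    unfolding alpha0_def alpha1_def by (simp add: algebra_simps)
  moreover have "p * q < 1" using p q by (smt (verit) mult_less_cancel_left1)
  moreover have "(1 - z) * b + z * (1 - a) > 0" using convex_comb_pos[OF z] a b by simp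
  ultimately have alpha: "q * alpha0 a b p z < alpha1 a b q z" by (smt (verit) mult_pos_pos)
  have num: "(a + b - 1) * z + 1 - b > 0"
    using convex_comb_pos[OF z, of "1 - b" a] a b by (simp add: algebra_simps)
  have "r1 a b q z = q * ((a + b - 1) * z + 1 - b) / alpha1 a b q z"
    unfolding r1_def by (simp add: algebra_simps)
  also have "\<dots> < ((a + b - 1) * z + 1 - b) / alpha0 a b p z"
    using mult_strict_left_mono[OF alpha num] al0 al1
    by (simp add: divide_simps algebra_simps)
  finally show ?thesis unfolding r0_def .
qed

end

theorem lemma2p32:
  fixes a b p q :: real
  assumes "a \<in> {0<..<1}" and "b \<in> {0<..<1}" and "p \<in> {0<..<1}" and "q \<in> {0<..<1}"
    and "a + b \<noteq> 1"
  shows "eta1 a b q < eta0 a b p"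
proof -
  have a: "0 < a" "a < 1" and b: "0 < b" "b < 1" and p: "0 < p" "p < 1" and q: "0 < q" "q < 1"
    using assms by auto
  note L0 = r0_linfrac_unit_interval[OF a b p] and L1 = r1_linfrac_unit_interval[OF a b q]
  have eta0: "eta0 a b p \<in> {0..1}" "r0 a b p (eta0 a b p) = eta0 a b p"
    using theI'[OF linfrac_unit_interval.unique_fixed_point[OF L0]]
    unfolding eta0_def r0_eq_linfrac by auto
  have eta1: "eta1 a b q \<in> {0..1}" "r1 a b q (eta1 a b q) = eta1 a b q"
    using theI'[OF linfrac_unit_interval.unique_fixed_point[OF L1]]
    unfolding eta1_def r1_eq_linfrac by auto
  have "r1 a b q (eta0 a b p) < eta0 a b p"
    using r1_less_r0[OF a b p q eta0(1)] eta0(2) by simp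
  then show ?thesis
    using linfrac_unit_interval.fixed_point_below[OF L1 eta0(1)] eta1
    unfolding r1_eq_linfrac by blast
qed

end
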